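(* Let $X$ be a regular Lusin space. Then every quasicontinuous function $f:X\to\mathbb{R}$ is of the first Baire class.
   Context: All spaces are assumed regular. A Hausdorff space $X$ is a Lusin space (in the sense of Kunen) if (a) every nowhere dense subset of $X$ is countable, (b) $X$ has at most countably many isolated points, and (c) $X$ is uncountable. A function $f:X\to Y$ is quasicontinuous if for every $x\in X$, every open $V\ni f(x)$ and every open $U\ni x$ there is a nonempty open $W\subseteq U$ with $f(W)\subseteq V$. A function $f:X\to\mathbb{R}$ is of the first Baire class if it is the pointwise limit of a sequence of continuous real-valued functions on $X$. *)

theory Defs
  imports "HOL-Analysis.Analysis"
begin

definition nowhere_dense_in :: "'a topology \<Rightarrow> 'a set \<Rightarrow> bool" where
  "nowhere_dense_in X S \<longleftrightarrow> S \<subseteq> topspace X \<and> X interior_of (X closure_of S) = {}"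

definition Lusin_space :: "'a topology \<Rightarrow> bool" where
  "Lusin_space X \<longleftrightarrow> Hausdorff_space X
     \<and> (\<forall>S. nowhere_dense_in X S \<longrightarrow> countable S)
     \<and> countable {x \<in> topspace X. openin X {x}}
     \<and> uncountable (topspace X)"

definition quasicontinuous_on :: "'a topology \<Rightarrow> ('a \<Rightarrow> real) \<Rightarrow> bool" where
  "quasicontinuous_on X f \<longleftrightarrow>
     (\<forall>x \<in> topspace X. \<forall>V U. open V \<and> f x \<in> V \<and> openin X U \<and> x \<in> U \<longrightarrow>
        (\<exists>W. openin X W \<and> W \<noteq> {} \<and> W \<subseteq> U \<and> f ` W \<subseteq> V))"

definition first_Baire_class :: "'a topology \<Rightarrow> ('a \<Rightarrow> real) \<Rightarrow> bool" where
  "first_Baire_class X f \<longleftrightarrow>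
     (\<exists>g :: nat \<Rightarrow> 'a \<Rightarrow> real. (\<forall>n. continuous_map X euclideanreal (g n))
        \<and> (\<forall>x \<in> topspace X. (\<lambda>n. g n x) \<longlonglongrightarrow> f x))"

end

theory Submission
  imports Defs
begin

text \<open>
  Quasicontinuity makes every set of points
  at which f oscillates by at least 1/(n+1) nowhere dense, so f has only countably many points
  of discontinuity. A Lusin space is moreover hereditarily Lindelof: a maximal disjoint family of
  nonempty open sets refining a cover is countable, and the part of the cover it misses is nowhere
  dense. Being regular, X is therefore normal and all its open sets are F-sigma. As points are
  closed, the preimage of an open set under f is then F-sigma as well. In a perfectly normal space
  such a function is of the first Baire class: composed with arctan it becomes bounded, it is
  a uniform limit of finite sums of two-valued functions on sets that are both F-sigma and
  G-delta (separation by the reduction property of F-sigma sets), each of these is a pointwise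
  limit of Urysohn functions, and the first Baire class is closed under uniform limits.
\<close>

section \<open>Lusin spaces\<close>

lemma nowhere_dense_in_iff:
  "nowhere_dense_in X S \<longleftrightarrow> S \<subseteq> topspace X \<and>
     (\<forall>T. openin X T \<longrightarrow> T \<noteq> {} \<longrightarrow> (\<exists>V. openin X V \<and> V \<noteq> {} \<and> V \<subseteq> T \<and> V \<inter> S = {}))"
proof -
  have "X interior_of (X closure_of S) = {} \<longleftrightarrow>
          (\<forall>T. openin X T \<longrightarrow> T \<noteq> {} \<longrightarrow> (\<exists>V. openin X V \<and> V \<noteq> {} \<and> V \<subseteq> T \<and> V \<inter> S = {}))"
  proof (intro iffI allI impI)
    fix T assume empty: "X interior_of (X closure_of S) = {}" and T: "openin X T" "T \<noteq> {}"
    then have "\<not> T \<subseteq> X closure_of S"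
      using interior_of_maximal[of T "X closure_of S" X] by auto
    moreover have "S \<inter> topspace X \<subseteq> X closure_of S" "T \<subseteq> topspace X"
      using closure_of_subset_Int[of X S] openin_subset[of X T] T by auto
    ultimately have "openin X (T - X closure_of S) \<and> T - X closure_of S \<noteq> {} \<and>
        T - X closure_of S \<subseteq> T \<and> (T - X closure_of S) \<inter> S = {}"
      using T by (auto simp: openin_diff)
    then show "\<exists>V. openin X V \<and> V \<noteq> {} \<and> V \<subseteq> T \<and> V \<inter> S = {}" ..
  next
    assume V: "\<forall>T. openin X T \<longrightarrow> T \<noteq> {} \<longrightarrow> (\<exists>V. openin X V \<and> V \<noteq> {} \<and> V \<subseteq> T \<and> V \<inter> S = {})"
    show "X interior_of (X closure_of S) = {}"
    proof (rule ccontr)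
      assume "X interior_of (X closure_of S) \<noteq> {}"
      with V obtain V where "openin X V" "V \<noteq> {}" "V \<subseteq> X interior_of (X closure_of S)" "V \<inter> S = {}"
        by (meson openin_interior_of)
      then show False
        using interior_of_subset[of X "X closure_of S"] openin_Int_closure_of_eq_empty[of X V S] by auto
    qed
  qed
  then show ?thesis
    unfolding nowhere_dense_in_def by (simp only:)
qed

lemma Lusin_space_countable_nowhere_dense:
  "Lusin_space X \<Longrightarrow> nowhere_dense_in X S \<Longrightarrow> countable S"
  by (simp add: Lusin_space_def)

lemma nowhere_dense_in_discrete_set:
  assumes "t1_space X" and "P \<subseteq> topspace X"
    and discrete: "\<And>x. x \<in> P \<Longrightarrow> \<exists>U. openin X U \<and> U \<inter> P = {x}"
    and not_isolated: "\<And>x. x \<in> P \<Longrightarrow> \<not> openin X {x}"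
  shows "nowhere_dense_in X P"
  unfolding nowhere_dense_in_iff
proof (intro conjI assms allI impI)
  fix T assume T: "openin X T" "T \<noteq> {}"
  show "\<exists>V. openin X V \<and> V \<noteq> {} \<and> V \<subseteq> T \<and> V \<inter> P = {}"
  proof (cases "T \<inter> P = {}")
    case True
    then show ?thesis using T by blast
  next
    case False
    then obtain x where x: "x \<in> T" "x \<in> P" by blast
    obtain U where U: "openin X U" "U \<inter> P = {x}" using discrete[OF x(2)] by (elim exE conjE)
    have "closedin X {x}"
      using closedin_t1_singleton[OF assms(1)] assms(2) x(2) by auto
    then have "openin X (T \<inter> U - {x})"
      using T U(1) by (intro openin_diff openin_Int) auto
    moreover have "T \<inter> U - {x} \<noteq> {}"
    proof
      assume "T \<inter> U - {x} = {}"
      then have "T \<inter> U = {x}" using x U(2) by auto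
      then show False using not_isolated[OF x(2)] T U(1) by (metis openin_Int)
    qed
    moreover have "(T \<inter> U - {x}) \<inter> P = {}" using U(2) by auto
    ultimately show ?thesis by blast
  qed
qed

lemma Lusin_space_countable_discrete_set:
  assumes L: "Lusin_space X" and P: "P \<subseteq> topspace X"
    and discrete: "\<And>x. x \<in> P \<Longrightarrow> \<exists>U. openin X U \<and> U \<inter> P = {x}"
  shows "countable P"
proof -
  have "countable {x \<in> P. openin X {x}}"
    using L P by (auto simp: Lusin_space_def elim: countable_subset[rotated])
  moreover have "nowhere_dense_in X {x \<in> P. \<not> openin X {x}}"
  proof (rule nowhere_dense_in_discrete_set)
    show "t1_space X" using L by (simp add: Lusin_space_def Hausdorff_imp_t1_space)
    show "\<exists>U. openin X U \<and> U \<inter> {x \<in> P. \<not> openin X {x}} = {x}"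
      if "x \<in> {x \<in> P. \<not> openin X {x}}" for x
      using discrete[of x] that by blast
  qed (use P in auto)
  then have "countable {x \<in> P. \<not> openin X {x}}"
    by (rule Lusin_space_countable_nowhere_dense[OF L])
  ultimately have "countable ({x \<in> P. openin X {x}} \<union> {x \<in> P. \<not> openin X {x}})"
    by simp
  then show ?thesis
    by (rule countable_subset[rotated]) blast
qed

lemma Lusin_space_countable_disjoint_family:
  assumes L: "Lusin_space X" and disjoint: "pairwise disjnt \<W>"
    and open_nonempty: "\<And>W. W \<in> \<W> \<Longrightarrow> openin X W \<and> W \<noteq> {}"
  shows "countable \<W>"
proof -
  define p where "p W = (SOME x. x \<in> W)" for W :: "'a set"
  have p: "p W \<in> W" if "W \<in> \<W>" for W
    using open_nonempty[OF that] unfolding p_def by (meson ex_in_conv someI_ex)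
  have unique: "W = W'" if "W \<in> \<W>" "W' \<in> \<W>" "p W' \<in> W" for W W'
    using that disjoint p unfolding pairwise_def disjnt_def by blast
  have inj: "inj_on p \<W>"
    using unique p by (metis inj_onI)
  have trace: "W \<inter> p ` \<W> = {p W}" if "W \<in> \<W>" for W
    using that unique p by blast
  have "countable (p ` \<W>)"
  proof (rule Lusin_space_countable_discrete_set[OF L])
    show "p ` \<W> \<subseteq> topspace X"
      using p open_nonempty openin_subset by blast
    show "\<exists>U. openin X U \<and> U \<inter> p ` \<W> = {x}" if "x \<in> p ` \<W>" for x
      using that trace open_nonempty by blast
  qed
  then show ?thesis
    using inj by (rule countable_image_inj_on)
qed

lemma maximal_disjoint_subfamily:
  obtains \<C> where "\<C> \<subseteq> \<W>" "pairwise disjnt \<C>"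
    "\<forall>W \<in> \<W>. W \<noteq> {} \<longrightarrow> (\<exists>C \<in> \<C>. W \<inter> C \<noteq> {})"
proof -
  define \<A> where "\<A> = {\<C>. \<C> \<subseteq> \<W> \<and> pairwise disjnt \<C>}"
  have "\<Union>\<K> \<in> \<A>" if "\<K> \<in> chains \<A>" for \<K>
    using that pairwise_chain_Union[of \<K> disjnt] unfolding chains_def \<A>_def by auto
  then obtain \<C> where \<C>: "\<C> \<in> \<A>" and maximal: "\<And>\<D>. \<D> \<in> \<A> \<Longrightarrow> \<C> \<subseteq> \<D> \<Longrightarrow> \<D> = \<C>"
    using Zorn_Lemma[of \<A>] by blast
  have "\<exists>C \<in> \<C>. W \<inter> C \<noteq> {}" if W: "W \<in> \<W>" "W \<noteq> {}" for W
  proof (rule ccontr)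
    assume "\<not> (\<exists>C \<in> \<C>. W \<inter> C \<noteq> {})"
    then have "insert W \<C> \<in> \<A>"
      using \<C> W unfolding \<A>_def by (auto simp: pairwise_insert disjnt_def)
    then have "W \<in> \<C>" using maximal by blast
    with \<open>\<not> (\<exists>C \<in> \<C>. W \<inter> C \<noteq> {})\<close> W(2) show False by blast
  qed
  with \<C> that show thesis unfolding \<A>_def by blast
qed

lemma nowhere_dense_in_Union_diff:
  assumes \<U>: "\<And>U. U \<in> \<U> \<Longrightarrow> openin X U" and \<C>: "\<And>C. C \<in> \<C> \<Longrightarrow> openin X C"
    and meets: "\<And>W U. openin X W \<Longrightarrow> W \<noteq> {} \<Longrightarrow> U \<in> \<U> \<Longrightarrow> W \<subseteq> U \<Longrightarrow> W \<inter> \<Union>\<C> \<noteq> {}"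
  shows "nowhere_dense_in X (\<Union>\<U> - \<Union>\<C>)"
  unfolding nowhere_dense_in_iff
proof (intro conjI allI impI)
  show "\<Union>\<U> - \<Union>\<C> \<subseteq> topspace X"
    using \<U> openin_subset by blast
  fix T assume T: "openin X T" "T \<noteq> {}"
  show "\<exists>V. openin X V \<and> V \<noteq> {} \<and> V \<subseteq> T \<and> V \<inter> (\<Union>\<U> - \<Union>\<C>) = {}"
  proof (cases "T \<inter> (\<Union>\<U> - \<Union>\<C>) = {}")
    case True
    with T show ?thesis by blast
  next
    case False
    then obtain r U where r: "r \<in> T" "r \<in> U" "U \<in> \<U>"
      by blast
    have "openin X (T \<inter> U)"
      using T(1) \<U>[OF r(3)] by (rule openin_Int)
    moreover have "T \<inter> U \<noteq> {}"
      using r by blast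
    ultimately obtain C where C: "C \<in> \<C>" "T \<inter> U \<inter> C \<noteq> {}"
      using meets[of "T \<inter> U" U] r(3) by blast
    have "openin X (T \<inter> U \<inter> C)"
      using \<open>openin X (T \<inter> U)\<close> \<C>[OF C(1)] by (rule openin_Int)
    moreover have "T \<inter> U \<inter> C \<inter> (\<Union>\<U> - \<Union>\<C>) = {}"
      using C(1) by auto
    ultimately show ?thesis
      using C(2) by blast
  qed
qed

lemma Lusin_space_countable_subcover:
  assumes L: "Lusin_space X" and \<U>: "\<And>U. U \<in> \<U> \<Longrightarrow> openin X U"
  shows "\<exists>\<V>. countable \<V> \<and> \<V> \<subseteq> \<U> \<and> \<Union>\<V> = \<Union>\<U>"
proof -
  define \<W> where "\<W> = {W. openin X W \<and> (\<exists>U \<in> \<U>. W \<subseteq> U)}"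
  obtain \<C> where \<C>: "\<C> \<subseteq> \<W>" "pairwise disjnt \<C>"
    and meets: "\<forall>W \<in> \<W>. W \<noteq> {} \<longrightarrow> (\<exists>C \<in> \<C>. W \<inter> C \<noteq> {})"
    by (rule maximal_disjoint_subfamily)
  have "countable (\<C> - {{}})"
    using \<C> pairwise_subset[OF \<C>(2)] unfolding \<W>_def
    by (intro Lusin_space_countable_disjoint_family[OF L]) auto
  then have "countable \<C>"
    by simp
  have "\<forall>C \<in> \<C>. \<exists>U \<in> \<U>. C \<subseteq> U"
    using \<C>(1) unfolding \<W>_def by auto
  then obtain u where u: "\<And>C. C \<in> \<C> \<Longrightarrow> u C \<in> \<U> \<and> C \<subseteq> u C"
    by metis
  define R where "R = \<Union>\<U> - \<Union>\<C>"
  have "nowhere_dense_in X R"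
    unfolding R_def
  proof (rule nowhere_dense_in_Union_diff[OF \<U>])
    show "openin X C" if "C \<in> \<C>" for C
      using that \<C>(1) unfolding \<W>_def by auto
    show "W \<inter> \<Union>\<C> \<noteq> {}" if "openin X W" "W \<noteq> {}" "U \<in> \<U>" "W \<subseteq> U" for W U
      using that meets unfolding \<W>_def by blast
  qed
  then have "countable R"
    by (rule Lusin_space_countable_nowhere_dense[OF L])
  have "\<forall>r \<in> R. \<exists>U \<in> \<U>. r \<in> U"
    unfolding R_def by auto
  then obtain v where v: "\<And>r. r \<in> R \<Longrightarrow> v r \<in> \<U> \<and> r \<in> v r"
    by metis
  have sub: "u ` \<C> \<union> v ` R \<subseteq> \<U>"
    using u v by blast
  have "\<Union>\<U> \<subseteq> \<Union>(u ` \<C> \<union> v ` R)"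
  proof
    fix x assume x: "x \<in> \<Union>\<U>"
    show "x \<in> \<Union>(u ` \<C> \<union> v ` R)"
    proof (cases "x \<in> R")
      case True
      then show ?thesis using v by blast
    next
      case False
      then obtain C where "C \<in> \<C>" "x \<in> C"
        using x unfolding R_def by blast
      then show ?thesis using u by blast
    qed
  qed
  with Union_mono[OF sub] have "\<Union>(u ` \<C> \<union> v ` R) = \<Union>\<U>"
    by (rule subset_antisym)
  moreover have "countable (u ` \<C> \<union> v ` R)"
    using \<open>countable \<C>\<close> \<open>countable R\<close> by simp
  ultimately show ?thesis
    using sub by blast
qed

lemma Lusin_space_imp_Lindelof_space:
  assumes "Lusin_space X"
  shows "Lindelof_space X"
  unfolding Lindelof_space_def
proof (intro allI impI)
  fix \<U> assume "(\<forall>U \<in> \<U>. openin X U) \<and> \<Union>\<U> = topspace X"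
  then show "\<exists>\<V>. countable \<V> \<and> \<V> \<subseteq> \<U> \<and> \<Union>\<V> = topspace X"
    using Lusin_space_countable_subcover[OF assms, of \<U>] by auto
qed

lemma regular_Lusin_space_openin_imp_fsigma_in:
  assumes R: "regular_space X" and L: "Lusin_space X" and G: "openin X G"
  shows "fsigma_in X G"
proof -
  define \<U> where "\<U> = {U. openin X U \<and> X closure_of U \<subseteq> G}"
  have closure: "U \<subseteq> X closure_of U" if "U \<in> \<U>" for U
    using that closure_of_subset openin_subset unfolding \<U>_def by (metis mem_Collect_eq)
  have "G \<subseteq> \<Union>\<U>"
  proof
    fix x assume "x \<in> G"
    then obtain U C where "openin X U" "closedin X C" "x \<in> U" "U \<subseteq> C" "C \<subseteq> G"
      using R G unfolding neighbourhood_base_of_closedin[symmetric] neighbourhood_base_of by metis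
    moreover have "X closure_of U \<subseteq> C"
      using \<open>closedin X C\<close> \<open>U \<subseteq> C\<close> by (simp add: closure_of_minimal)
    ultimately have "U \<in> \<U>"
      unfolding \<U>_def by auto
    with \<open>x \<in> U\<close> show "x \<in> \<Union>\<U>" by blast
  qed
  moreover have "\<exists>\<V>. countable \<V> \<and> \<V> \<subseteq> \<U> \<and> \<Union>\<V> = \<Union>\<U>"
    by (rule Lusin_space_countable_subcover[OF L]) (simp add: \<U>_def)
  then obtain \<V> where \<V>: "countable \<V>" "\<V> \<subseteq> \<U>" "\<Union>\<V> = \<Union>\<U>"
    by (elim exE conjE)
  ultimately have "G \<subseteq> (\<Union>U \<in> \<V>. X closure_of U)"
    using closure by blast
  moreover have "(\<Union>U \<in> \<V>. X closure_of U) \<subseteq> G"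
    using \<V>(2) unfolding \<U>_def by blast
  ultimately have "G = (\<Union>U \<in> \<V>. X closure_of U)"
    by (rule subset_antisym)
  also have "fsigma_in X \<dots>"
    using \<V>(1) by (intro fsigma_in_Union) (auto intro: closed_imp_fsigma_in)
  finally show ?thesis .
qed

lemma quasicontinuous_onE:
  assumes "quasicontinuous_on X f" "x \<in> topspace X" "open V" "f x \<in> V" "openin X U" "x \<in> U"
  obtains W where "openin X W" "W \<noteq> {}" "W \<subseteq> U" "f ` W \<subseteq> V"
proof -
  have "\<exists>W. openin X W \<and> W \<noteq> {} \<and> W \<subseteq> U \<and> f ` W \<subseteq> V"
    using assms unfolding quasicontinuous_on_def by simp
  then show thesis
    using that by (elim exE conjE)
qed

lemma quasicontinuous_on_oscillation_nowhere_dense: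
  assumes q: "quasicontinuous_on X f" and e: "e > 0"
  shows "nowhere_dense_in X {x \<in> topspace X. \<forall>U. openin X U \<and> x \<in> U \<longrightarrow> (\<exists>y \<in> U. e \<le> \<bar>f y - f x\<bar>)}"
    (is "nowhere_dense_in X ?S")
  unfolding nowhere_dense_in_iff
proof (intro conjI allI impI)
  show "?S \<subseteq> topspace X"
    by auto
  fix T assume T: "openin X T" "T \<noteq> {}"
  then obtain x0 where x0: "x0 \<in> T" "x0 \<in> topspace X"
    using openin_subset by blast
  have "open (ball (f x0) (e/2))" "f x0 \<in> ball (f x0) (e/2)"
    using e by simp_all
  then obtain W where W: "openin X W" "W \<noteq> {}" "W \<subseteq> T" "f ` W \<subseteq> ball (f x0) (e/2)"
    by (rule quasicontinuous_onE[OF q x0(2) _ _ T(1) x0(1)])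
  have "x \<notin> ?S" if "x \<in> W" for x
  proof
    assume "x \<in> ?S"
    then obtain y where "y \<in> W" "e \<le> \<bar>f y - f x\<bar>"
      using W(1) \<open>x \<in> W\<close> by blast
    moreover have "dist (f x0) (f x) < e/2" "dist (f x0) (f y) < e/2"
      using W(4) \<open>x \<in> W\<close> \<open>y \<in> W\<close> by auto
    ultimately show False
      unfolding dist_real_def by arith
  qed
  then have "W \<inter> ?S = {}"
    by blast
  with W show "\<exists>V. openin X V \<and> V \<noteq> {} \<and> V \<subseteq> T \<and> V \<inter> ?S = {}"
    by blast
qed

lemma Lusin_space_countable_discontinuities:
  assumes L: "Lusin_space X" and q: "quasicontinuous_on X f"
  shows "countable {x \<in> topspace X. \<not> topcontinuous_at X euclideanreal f x}"
proof -
  define S where "S n = {x \<in> topspace X. \<forall>U. openin X U \<and> x \<in> U \<longrightarrow>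
                          (\<exists>y \<in> U. 1 / Suc n \<le> \<bar>f y - f x\<bar>)}" for n :: nat
  have "countable (S n)" for n
    unfolding S_def
    using Lusin_space_countable_nowhere_dense[OF L quasicontinuous_on_oscillation_nowhere_dense[OF q]]
    by simp
  moreover have "{x \<in> topspace X. \<not> topcontinuous_at X euclideanreal f x} \<subseteq> (\<Union>n. S n)"
  proof
    fix x assume "x \<in> {x \<in> topspace X. \<not> topcontinuous_at X euclideanreal f x}"
    then obtain V where x: "x \<in> topspace X" and V: "open V" "f x \<in> V"
      and escape: "\<And>U. openin X U \<Longrightarrow> x \<in> U \<Longrightarrow> \<exists>y \<in> U. f y \<notin> V"
      unfolding topcontinuous_at_def by auto
    obtain e where e: "e > 0" "ball (f x) e \<subseteq> V"
      using V open_contains_ball by blast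
    obtain n where n: "1 / Suc n < e"
      using e(1) by (rule nat_approx_posE)
    have "\<exists>y \<in> U. 1 / Suc n \<le> \<bar>f y - f x\<bar>" if U: "openin X U" "x \<in> U" for U
    proof -
      obtain y where "y \<in> U" "f y \<notin> ball (f x) e"
        using escape[OF U] e(2) by blast
      then have "e \<le> \<bar>f y - f x\<bar>"
        by (simp add: dist_real_def)
      with n \<open>y \<in> U\<close> show ?thesis
        by (intro bexI[of _ y]) auto
    qed
    with x have "x \<in> S n"
      unfolding S_def by blast
    then show "x \<in> (\<Union>n. S n)"
      by blast
  qed
  ultimately show ?thesis
    by (simp add: countable_subset)
qed

section \<open>F-sigma-measurable functions\<close>

definition fsigma_measurable :: "'a topology \<Rightarrow> ('a \<Rightarrow> 'b::topological_space) \<Rightarrow> bool" where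
  "fsigma_measurable X f \<longleftrightarrow> (\<forall>V. open V \<longrightarrow> fsigma_in X {x \<in> topspace X. f x \<in> V})"

lemma fsigma_measurableD:
  "fsigma_measurable X f \<Longrightarrow> open V \<Longrightarrow> fsigma_in X {x \<in> topspace X. f x \<in> V}"
  by (simp add: fsigma_measurable_def)

lemma fsigma_in_countable:
  assumes "t1_space X" and "countable D" and "D \<subseteq> topspace X"
  shows "fsigma_in X D"
proof -
  have "closedin X {x}" if "x \<in> D" for x
    using closedin_t1_singleton[OF assms(1)] assms(3) that by auto
  then have "fsigma_in X (\<Union>x \<in> D. {x})"
    using assms(2) by (intro fsigma_in_Union) (auto intro: closed_imp_fsigma_in)
  then show ?thesis
    by simp
qed

lemma fsigma_measurable_countable_discontinuities:
  fixes f :: "'a \<Rightarrow> 'b::topological_space"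
  assumes t1: "t1_space X" and perfect: "\<And>G. openin X G \<Longrightarrow> fsigma_in X G"
    and countable_discontinuities: "countable {x \<in> topspace X. \<not> topcontinuous_at X euclidean f x}"
  shows "fsigma_measurable X f"
  unfolding fsigma_measurable_def
proof (intro allI impI)
  fix V :: "'b set" assume "open V"
  define S where "S = {x \<in> topspace X. f x \<in> V}"
  define D where "D = {x \<in> topspace X. \<not> topcontinuous_at X euclidean f x}"
  have "S \<subseteq> X interior_of S \<union> (D \<inter> S)"
  proof
    fix x assume x: "x \<in> S"
    show "x \<in> X interior_of S \<union> (D \<inter> S)"
    proof (cases "x \<in> D")
      case False
      with x have "topcontinuous_at X euclidean f x"
        unfolding S_def D_def by blast
      then obtain U where U: "openin X U" "x \<in> U" "\<forall>y \<in> U. f y \<in> V"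
        using \<open>open V\<close> x unfolding topcontinuous_at_def S_def by auto
      then have "U \<subseteq> S"
        using openin_subset unfolding S_def by blast
      then have "U \<subseteq> X interior_of S"
        using U(1) by (rule interior_of_maximal)
      with U(2) show ?thesis
        by blast
    qed (use x in auto)
  qed
  then have S: "S = X interior_of S \<union> (D \<inter> S)"
    using interior_of_subset[of X S] by auto
  have "fsigma_in X (X interior_of S)"
    by (simp add: perfect)
  moreover have "fsigma_in X (D \<inter> S)"
    using countable_discontinuities unfolding D_def by (intro fsigma_in_countable t1) auto
  ultimately have "fsigma_in X (X interior_of S \<union> (D \<inter> S))"
    by (rule fsigma_in_Un)
  then have "fsigma_in X S"
    using S by simp
  then show "fsigma_in X {x \<in> topspace X. f x \<in> V}"
    unfolding S_def .
qed

lemma fsigma_measurable_compose: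
  fixes f :: "'a \<Rightarrow> 'b::topological_space" and g :: "'b \<Rightarrow> 'c::topological_space"
  assumes "fsigma_measurable X f" and "continuous_on UNIV g"
  shows "fsigma_measurable X (\<lambda>x. g (f x))"
  unfolding fsigma_measurable_def
proof (intro allI impI)
  fix V :: "'c set" assume "open V"
  then have "open (g -` V)"
    using assms(2) by (rule open_vimage)
  then have "fsigma_in X {x \<in> topspace X. f x \<in> g -` V}"
    by (rule fsigma_measurableD[OF assms(1)])
  then show "fsigma_in X {x \<in> topspace X. g (f x) \<in> V}"
    by simp
qed

lemma fsigma_in_closedin_diff:
  assumes "\<And>G. openin X G \<Longrightarrow> fsigma_in X G" and "closedin X A" and "closedin X B"
  shows "fsigma_in X (A - B)"
proof -
  have "gdelta_in X B"
    using assms by (simp add: gdelta_in_fsigma_in closedin_subset openin_diff)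
  with assms(2) show ?thesis
    by (simp add: fsigma_in_diff closed_imp_fsigma_in)
qed

lemma Union_first_entry_split:
  fixes F H :: "nat \<Rightarrow> 'a set"
  shows "(\<Union>k. F k - (\<Union>j<k. H j)) \<union> (\<Union>k. H k - (\<Union>j\<le>k. F j)) = (\<Union>k. F k) \<union> (\<Union>k. H k)"
    and "(\<Union>k. F k - (\<Union>j<k. H j)) \<inter> (\<Union>k. H k - (\<Union>j\<le>k. F j)) = {}"
proof -
  have "x \<in> (\<Union>k. F k - (\<Union>j<k. H j)) \<union> (\<Union>k. H k - (\<Union>j\<le>k. F j))"
    if "\<exists>k. x \<in> F k \<or> x \<in> H k" for x
  proof -
    define k where "k = (LEAST k. x \<in> F k \<or> x \<in> H k)"
    have k: "x \<in> F k \<or> x \<in> H k"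
      unfolding k_def using that by (rule LeastI_ex)
    have earlier: "x \<notin> F j \<and> x \<notin> H j" if "j < k" for j
      using not_less_Least[of j "\<lambda>k. x \<in> F k \<or> x \<in> H k"] that unfolding k_def by blast
    show ?thesis
    proof (cases "x \<in> F k")
      case True
      with earlier have "x \<in> F k - (\<Union>j<k. H j)"
        by auto
      then show ?thesis
        by blast
    next
      case False
      with k earlier have "x \<in> H k - (\<Union>j\<le>k. F j)"
        by (auto simp: le_less)
      then show ?thesis
        by blast
    qed
  qed
  then have "(\<Union>k. F k) \<union> (\<Union>k. H k) \<subseteq> (\<Union>k. F k - (\<Union>j<k. H j)) \<union> (\<Union>k. H k - (\<Union>j\<le>k. F j))"
    by blast
  moreover have "(\<Union>k. F k - (\<Union>j<k. H j)) \<union> (\<Union>k. H k - (\<Union>j\<le>k. F j)) \<subseteq> (\<Union>k. F k) \<union> (\<Union>k. H k)"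
    by blast
  ultimately show "(\<Union>k. F k - (\<Union>j<k. H j)) \<union> (\<Union>k. H k - (\<Union>j\<le>k. F j)) = (\<Union>k. F k) \<union> (\<Union>k. H k)"
    by (rule subset_antisym[rotated])
  show "(\<Union>k. F k - (\<Union>j<k. H j)) \<inter> (\<Union>k. H k - (\<Union>j\<le>k. F j)) = {}"
  proof (rule equals0I)
    fix x assume "x \<in> (\<Union>k. F k - (\<Union>j<k. H j)) \<inter> (\<Union>k. H k - (\<Union>j\<le>k. F j))"
    then obtain k m where "x \<in> F k - (\<Union>j<k. H j)" "x \<in> H m - (\<Union>j\<le>m. F j)"
      by blast
    then show False
      by (cases "m < k") auto
  qed
qed

lemma fsigma_in_reduction:
  assumes perfect: "\<And>G. openin X G \<Longrightarrow> fsigma_in X G"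
    and S: "fsigma_in X S" and T: "fsigma_in X T"
  obtains S' T' where "S' \<subseteq> S" "T' \<subseteq> T" "fsigma_in X S'" "fsigma_in X T'"
    "S' \<union> T' = S \<union> T" "S' \<inter> T' = {}"
proof -
  obtain F where F_closed: "\<forall>n. closedin X (F n)" and "\<forall>n. F n \<subseteq> F (Suc n)"
    and F_Union: "\<Union>(range F) = S"
    using S unfolding fsigma_in_ascending by (elim exE conjE)
  obtain H where H_closed: "\<forall>n. closedin X (H n)" and "\<forall>n. H n \<subseteq> H (Suc n)"
    and H_Union: "\<Union>(range H) = T"
    using T unfolding fsigma_in_ascending by (elim exE conjE)
  define S' where "S' = (\<Union>k. F k - (\<Union>j<k. H j))"
  define T' where "T' = (\<Union>k. H k - (\<Union>j\<le>k. F j))"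
  have "fsigma_in X S'"
    unfolding S'_def using F_closed H_closed
    by (auto intro!: fsigma_in_Union fsigma_in_closedin_diff[OF perfect] closedin_Union)
  moreover have "fsigma_in X T'"
    unfolding T'_def using F_closed H_closed
    by (auto intro!: fsigma_in_Union fsigma_in_closedin_diff[OF perfect] closedin_Union)
  moreover have "S' \<subseteq> S" "T' \<subseteq> T"
    unfolding S'_def T'_def using F_Union H_Union by auto
  moreover have "S' \<union> T' = S \<union> T" "S' \<inter> T' = {}"
    unfolding S'_def T'_def using Union_first_entry_split[of F H] F_Union H_Union by simp_all
  ultimately show thesis
    using that by blast
qed

lemma fsigma_gdelta_separation:
  assumes perfect: "\<And>G. openin X G \<Longrightarrow> fsigma_in X G"
    and P: "gdelta_in X P" and Q: "fsigma_in X Q" and "P \<subseteq> Q"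
  obtains A where "P \<subseteq> A" "A \<subseteq> Q" "fsigma_in X A" "gdelta_in X A"
proof -
  have "fsigma_in X (topspace X - P)"
    using P by (simp add: gdelta_in_fsigma_in)
  with perfect Q obtain A B where AB: "A \<subseteq> Q" "B \<subseteq> topspace X - P" "fsigma_in X A" "fsigma_in X B"
    "A \<union> B = Q \<union> (topspace X - P)" "A \<inter> B = {}"
    by (rule fsigma_in_reduction)
  have "Q \<subseteq> topspace X"
    using Q by (rule fsigma_in_subset)
  with AB \<open>P \<subseteq> Q\<close> have "topspace X - A = B" "P \<subseteq> A"
    by auto
  with AB have "gdelta_in X A"
    by (simp add: gdelta_in_fsigma_in fsigma_in_subset)
  with AB \<open>P \<subseteq> A\<close> show thesis
    using that by blast
qed

lemma fsigma_measurable_ambiguous_superlevel_set: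
  fixes h :: "'a \<Rightarrow> real"
  assumes perfect: "\<And>G. openin X G \<Longrightarrow> fsigma_in X G"
    and h: "fsigma_measurable X h" and "d < c"
  obtains A where "{x \<in> topspace X. c \<le> h x} \<subseteq> A" "A \<subseteq> {x \<in> topspace X. d < h x}"
    "fsigma_in X A" "gdelta_in X A"
proof (rule fsigma_gdelta_separation[OF perfect])
  have "fsigma_in X {x \<in> topspace X. h x \<in> {..<c}}"
    by (rule fsigma_measurableD[OF h]) simp
  moreover have "topspace X - {x \<in> topspace X. c \<le> h x} = {x \<in> topspace X. h x \<in> {..<c}}"
    by auto
  ultimately show "gdelta_in X {x \<in> topspace X. c \<le> h x}"
    by (simp add: gdelta_in_fsigma_in)
  have "fsigma_in X {x \<in> topspace X. h x \<in> {d<..}}"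
    by (rule fsigma_measurableD[OF h]) simp
  then show "fsigma_in X {x \<in> topspace X. d < h x}"
    by simp
  show "{x \<in> topspace X. c \<le> h x} \<subseteq> {x \<in> topspace X. d < h x}"
    using \<open>d < c\<close> by auto
qed (use that in auto)

section \<open>The first Baire class\<close>

lemma first_Baire_class_cong:
  assumes "first_Baire_class X f" and "\<And>x. x \<in> topspace X \<Longrightarrow> f x = g x"
  shows "first_Baire_class X g"
  using assms unfolding first_Baire_class_def by auto

lemma first_Baire_class_const: "first_Baire_class X (\<lambda>x. c)"
  unfolding first_Baire_class_def by (rule exI[of _ "\<lambda>n x. c"]) simp

lemma first_Baire_class_add:
  assumes "first_Baire_class X u" and "first_Baire_class X v"
  shows "first_Baire_class X (\<lambda>x. u x + v x)"
proof -
  obtain g where g: "\<And>n. continuous_map X euclideanreal (g n)"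
      "\<And>x. x \<in> topspace X \<Longrightarrow> (\<lambda>n. g n x) \<longlonglongrightarrow> u x"
    using assms(1) unfolding first_Baire_class_def by auto
  obtain h where h: "\<And>n. continuous_map X euclideanreal (h n)"
      "\<And>x. x \<in> topspace X \<Longrightarrow> (\<lambda>n. h n x) \<longlonglongrightarrow> v x"
    using assms(2) unfolding first_Baire_class_def by auto
  show ?thesis
    unfolding first_Baire_class_def
    by (rule exI[of _ "\<lambda>n x. g n x + h n x"]) (simp add: g h continuous_map_add tendsto_add)
qed

lemma first_Baire_class_diff:
  assumes "first_Baire_class X u" and "first_Baire_class X v"
  shows "first_Baire_class X (\<lambda>x. u x - v x)"
proof -
  obtain g where g: "\<And>n. continuous_map X euclideanreal (g n)"
      "\<And>x. x \<in> topspace X \<Longrightarrow> (\<lambda>n. g n x) \<longlonglongrightarrow> u x"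
    using assms(1) unfolding first_Baire_class_def by auto
  obtain h where h: "\<And>n. continuous_map X euclideanreal (h n)"
      "\<And>x. x \<in> topspace X \<Longrightarrow> (\<lambda>n. h n x) \<longlonglongrightarrow> v x"
    using assms(2) unfolding first_Baire_class_def by auto
  show ?thesis
    unfolding first_Baire_class_def
    by (rule exI[of _ "\<lambda>n x. g n x - h n x"]) (simp add: g h continuous_map_diff tendsto_diff)
qed

lemma first_Baire_class_sum:
  assumes "finite I" and "\<And>i. i \<in> I \<Longrightarrow> first_Baire_class X (f i)"
  shows "first_Baire_class X (\<lambda>x. \<Sum>i \<in> I. f i x)"
  using assms by (induction I rule: finite_induct) (auto intro: first_Baire_class_add first_Baire_class_const)

lemma tendsto_constant_on_ascending:
  assumes "\<forall>n. F n \<subseteq> F (Suc n)" and "x \<in> F k" and "\<And>n. g n ` F n \<subseteq> {c}"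
  shows "(\<lambda>n. g n x) \<longlonglongrightarrow> c"
proof -
  have "g n x = c" if "k \<le> n" for n
    using lift_Suc_mono_le[of F, OF _ that] assms by (auto simp: image_subset_iff)
  then have "\<forall>\<^sub>F n in sequentially. g n x = c"
    by (rule eventually_sequentiallyI)
  then show ?thesis
    by (rule tendsto_eventually)
qed

lemma first_Baire_class_two_valued:
  fixes c d :: real
  assumes "normal_space X" and "fsigma_in X A" and "gdelta_in X A"
  shows "first_Baire_class X (\<lambda>x. if x \<in> A then c else d)"
proof -
  obtain F where F: "\<forall>n. closedin X (F n)" "\<forall>n. F n \<subseteq> F (Suc n)" "\<Union>(range F) = A"
    using assms(2) unfolding fsigma_in_ascending by (elim exE conjE)
  have "fsigma_in X (topspace X - A)"
    using assms(3) by (simp add: gdelta_in_fsigma_in)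
  then obtain H where H: "\<forall>n. closedin X (H n)" "\<forall>n. H n \<subseteq> H (Suc n)" "\<Union>(range H) = topspace X - A"
    unfolding fsigma_in_ascending by (elim exE conjE)
  have "\<exists>g. continuous_map X euclideanreal g \<and> g ` F n \<subseteq> {c} \<and> g ` H n \<subseteq> {d}" for n
  proof -
    have "disjnt (F n) (H n)"
      using F(3) H(3) unfolding disjnt_def by auto
    then obtain g where "continuous_map X euclideanreal g" "g ` F n \<subseteq> {c}" "g ` H n \<subseteq> {d}"
      by (rule Urysohn_lemma_alt[OF assms(1) F(1)[rule_format] H(1)[rule_format]])
    then show ?thesis
      by auto
  qed
  then obtain g where g: "\<And>n. continuous_map X euclideanreal (g n)"
      "\<And>n. g n ` F n \<subseteq> {c}" "\<And>n. g n ` H n \<subseteq> {d}"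
    by metis
  have lim: "(\<lambda>n. g n x) \<longlonglongrightarrow> (if x \<in> A then c else d)" if x: "x \<in> topspace X" for x
  proof (cases "x \<in> A")
    case True
    then obtain k where "x \<in> F k"
      using F(3) by auto
    with True F(2) g(2) show ?thesis
      by (simp add: tendsto_constant_on_ascending)
  next
    case False
    then obtain k where "x \<in> H k"
      using H(3) x by auto
    with False H(2) g(3) show ?thesis
      by (simp add: tendsto_constant_on_ascending)
  qed
  show ?thesis
    unfolding first_Baire_class_def by (rule exI[of _ g]) (use g(1) lim in blast)
qed

lemma tendsto_sum_clamped:
  fixes v :: "nat \<Rightarrow> nat \<Rightarrow> real"
  assumes lim: "\<And>k. (\<lambda>n. v k n) \<longlonglongrightarrow> u k" and bound: "\<And>k. \<bar>u k\<bar> \<le> M k" and "summable M"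
  shows "(\<lambda>n. \<Sum>k<n. max (- M k) (min (M k) (v k n))) \<longlonglongrightarrow> (\<Sum>k. u k)"
proof -
  define a where "a k n = (if k < n then max (- M k) (min (M k) (v k n)) else 0)" for k n
  have "(\<lambda>n. a k n) \<longlonglongrightarrow> u k" for k
  proof -
    have "(\<lambda>n. max (- M k) (min (M k) (v k n))) \<longlonglongrightarrow> max (- M k) (min (M k) (u k))"
      by (intro tendsto_intros lim)
    moreover have "max (- M k) (min (M k) (u k)) = u k"
      using bound[of k] by auto
    moreover have "\<forall>\<^sub>F n in sequentially. max (- M k) (min (M k) (v k n)) = a k n"
      unfolding a_def by (rule eventually_sequentiallyI[of "Suc k"]) simp
    ultimately show ?thesis
      by (simp add: Lim_transform_eventually)
  qed
  moreover have "\<forall>\<^sub>F (k, n) in at_top \<times>\<^sub>F sequentially. norm (a k n) \<le> M k"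
  proof (rule always_eventually, clarify)
    fix k n
    have "0 \<le> M k"
      using bound[of k] by linarith
    then show "norm (a k n) \<le> M k"
      unfolding a_def by auto
  qed
  ultimately have "(\<lambda>n. \<Sum>k. a k n) \<longlonglongrightarrow> (\<Sum>k. u k)"
    using tannerys_theorem[OF _ _ \<open>summable M\<close> sequentially_bot] by blast
  moreover have "(\<Sum>k. a k n) = (\<Sum>k<n. max (- M k) (min (M k) (v k n)))" for n
    by (subst suminf_finite[of "{..<n}"]) (auto simp: a_def)
  ultimately show ?thesis
    by simp
qed

lemma first_Baire_class_suminf:
  assumes u: "\<And>k. first_Baire_class X (u k)"
    and bound: "\<And>k x. x \<in> topspace X \<Longrightarrow> \<bar>u k x\<bar> \<le> M k" and "summable M"
  shows "first_Baire_class X (\<lambda>x. \<Sum>k. u k x)"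
proof -
  have "\<forall>k. \<exists>g. (\<forall>n. continuous_map X euclideanreal (g n)) \<and> (\<forall>x \<in> topspace X. (\<lambda>n. g n x) \<longlonglongrightarrow> u k x)"
    using u unfolding first_Baire_class_def by blast
  then obtain g where g: "\<And>k n. continuous_map X euclideanreal (g k n)"
      "\<And>k x. x \<in> topspace X \<Longrightarrow> (\<lambda>n. g k n x) \<longlonglongrightarrow> u k x"
    by metis
  define G where "G n x = (\<Sum>k<n. max (- M k) (min (M k) (g k n x)))" for n x
  have continuous: "continuous_map X euclideanreal (G n)" for n
    unfolding G_def
    by (intro continuous_map_sum continuous_map_real_max continuous_map_real_min g(1)) auto
  have convergent: "(\<lambda>n. G n x) \<longlonglongrightarrow> (\<Sum>k. u k x)" if "x \<in> topspace X" for x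
    unfolding G_def using g(2)[OF that] bound[OF that] \<open>summable M\<close> by (rule tendsto_sum_clamped)
  show ?thesis
    unfolding first_Baire_class_def by (rule exI[of _ G]) (use continuous convergent in blast)
qed

lemma first_Baire_class_uniform_approx:
  assumes approx: "\<And>e. e > 0 \<Longrightarrow> \<exists>s. first_Baire_class X s \<and> (\<forall>x \<in> topspace X. \<bar>s x - h x\<bar> \<le> e)"
  shows "first_Baire_class X h"
proof -
  have "\<forall>m. \<exists>s. first_Baire_class X s \<and> (\<forall>x \<in> topspace X. \<bar>s x - h x\<bar> \<le> (1/2) ^ m)"
    by (intro allI approx) simp
  then obtain s where s: "\<And>m. first_Baire_class X (s m)"
      "\<And>m x. x \<in> topspace X \<Longrightarrow> \<bar>s m x - h x\<bar> \<le> (1/2) ^ m"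
    by metis
  define u where "u k x = s (Suc k) x - s k x" for k x
  have "first_Baire_class X (\<lambda>x. \<Sum>k. u k x)"
  proof (rule first_Baire_class_suminf)
    show "first_Baire_class X (u k)" for k
      unfolding u_def by (intro first_Baire_class_diff s(1))
    show "\<bar>u k x\<bar> \<le> 2 * (1/2) ^ k" if "x \<in> topspace X" for k x
    proof -
      have "(1/2 :: real) ^ Suc k = (1/2) ^ k / 2" "(0 :: real) \<le> (1/2) ^ k"
        by simp_all
      then show ?thesis
        using s(2)[OF that, of k] s(2)[OF that, of "Suc k"] unfolding u_def by arith
    qed
    show "summable (\<lambda>k. 2 * (1/2 :: real) ^ k)"
      by (intro summable_mult summable_geometric) simp
  qed
  then have "first_Baire_class X (\<lambda>x. s 0 x + (\<Sum>k. u k x))"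
    by (rule first_Baire_class_add[OF s(1)])
  moreover have "s 0 x + (\<Sum>k. u k x) = h x" if x: "x \<in> topspace X" for x
  proof -
    have "(\<lambda>n. s n x - h x) \<longlonglongrightarrow> 0"
    proof (rule Lim_null_comparison)
      show "\<forall>\<^sub>F n in sequentially. norm (s n x - h x) \<le> (1/2) ^ n"
        using s(2)[OF x] by simp
    qed (simp add: LIMSEQ_power_zero)
    then have "(\<lambda>n. s n x) \<longlonglongrightarrow> h x"
      by (rule LIM_zero_cancel)
    then have "(\<lambda>n. \<Sum>k<n. u k x) \<longlonglongrightarrow> h x - s 0 x"
      unfolding u_def sum_lessThan_telescope[of "\<lambda>k. s k x"] by (intro tendsto_diff tendsto_const)
    then have "(\<lambda>k. u k x) sums (h x - s 0 x)"
      unfolding sums_def .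
    then show ?thesis
      by (simp add: sums_iff)
  qed
  ultimately show ?thesis
    by (rule first_Baire_class_cong)
qed

lemma first_Baire_class_compose_interval:
  fixes a b :: real
  assumes h: "first_Baire_class X h" and "a < b" and range: "\<And>x. x \<in> topspace X \<Longrightarrow> h x \<in> {a<..<b}"
    and \<phi>: "continuous_on {a<..<b} \<phi>"
  shows "first_Baire_class X (\<lambda>x. \<phi> (h x))"
proof -
  obtain g where g: "\<And>n. continuous_map X euclideanreal (g n)"
      "\<And>x. x \<in> topspace X \<Longrightarrow> (\<lambda>n. g n x) \<longlonglongrightarrow> h x"
    using h unfolding first_Baire_class_def by auto
  define \<delta> where "\<delta> n = (b - a) / real (n + 3)" for n
  define clamp where "clamp n y = max (a + \<delta> n) (min (b - \<delta> n) y)" for n y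
  have "clamp n y \<in> {a<..<b}" for n y
  proof -
    have "(b - a) * (2 / real (n + 3)) < (b - a) * 1"
      using \<open>a < b\<close> by (intro mult_strict_left_mono) auto
    moreover have "2 * \<delta> n = (b - a) * (2 / real (n + 3))"
      unfolding \<delta>_def by simp
    moreover have "0 < \<delta> n"
      using \<open>a < b\<close> unfolding \<delta>_def by simp
    ultimately show ?thesis
      unfolding clamp_def by auto
  qed
  then have "continuous_on UNIV (\<lambda>y. \<phi> (clamp n y))" for n
    by (intro continuous_on_compose2[OF \<phi>]) (auto simp: clamp_def intro!: continuous_intros)
  then have continuous: "continuous_map X euclideanreal (\<lambda>x. \<phi> (clamp n (g n x)))" for n
    using continuous_map_compose[OF g(1), of euclideanreal "\<lambda>y. \<phi> (clamp n y)"] by (simp add: o_def)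
  have convergent: "(\<lambda>n. \<phi> (clamp n (g n x))) \<longlonglongrightarrow> \<phi> (h x)" if x: "x \<in> topspace X" for x
  proof -
    have "\<delta> \<longlonglongrightarrow> 0"
      unfolding \<delta>_def using LIMSEQ_ignore_initial_segment[OF lim_const_over_n, of "b - a" 3] by simp
    then have "(\<lambda>n. clamp n (g n x)) \<longlonglongrightarrow> max (a + 0) (min (b - 0) (h x))"
      unfolding clamp_def by (intro tendsto_intros g(2)[OF x])
    moreover have "max (a + 0) (min (b - 0) (h x)) = h x"
      using range[OF x] by auto
    ultimately have "(\<lambda>n. clamp n (g n x)) \<longlonglongrightarrow> h x"
      by simp
    moreover have "isCont \<phi> (h x)"
      using \<phi> range[OF x] continuous_on_eq_continuous_at[of "{a<..<b}" \<phi>] by simp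
    ultimately show ?thesis
      by (rule isCont_tendsto_compose[rotated])
  qed
  show ?thesis
    unfolding first_Baire_class_def
    by (rule exI[of _ "\<lambda>n x. \<phi> (clamp n (g n x))"]) (use continuous convergent in blast)
qed

lemma card_levels_approx:
  fixes e y :: real
  assumes "e > 0" and "0 \<le> y" and "y \<le> real N * e" and "J \<subseteq> {1..N}"
    and below: "\<And>j. j \<in> {1..N} \<Longrightarrow> real j * e \<le> y \<Longrightarrow> j \<in> J"
    and above: "\<And>j. j \<in> J \<Longrightarrow> real j * e < y + e"
  shows "\<bar>e * real (card J) - y\<bar> \<le> e"
proof -
  define k where "k = nat \<lfloor>y / e\<rfloor>"
  have k: "real k * e \<le> y" "y < (real k + 1) * e"
  proof -
    have "real k = of_int \<lfloor>y / e\<rfloor>"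
      unfolding k_def using \<open>0 \<le> y\<close> \<open>e > 0\<close> by simp
    then have "real k \<le> y / e" "y / e < real k + 1"
      by linarith+
    then show "real k * e \<le> y" "y < (real k + 1) * e"
      using \<open>e > 0\<close> by (simp_all add: field_simps)
  qed
  have "k \<le> N"
  proof -
    have "real k * e \<le> real N * e"
      using k(1) assms(3) by linarith
    then show ?thesis
      using \<open>e > 0\<close> by simp
  qed
  have "{1..k} \<subseteq> J"
  proof
    fix j assume "j \<in> {1..k}"
    then have "real j * e \<le> real k * e"
      using \<open>e > 0\<close> by simp
    with \<open>j \<in> {1..k}\<close> \<open>k \<le> N\<close> k(1) show "j \<in> J"
      by (intro below) auto
  qed
  have "J \<subseteq> {1..k + 1}"
  proof
    fix j assume "j \<in> J"
    moreover have "(real k + 2) * e = (real k + 1) * e + e"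
      by (simp add: algebra_simps)
    ultimately have "real j * e < (real k + 2) * e"
      using above[OF \<open>j \<in> J\<close>] k(2) by linarith
    then have "j \<le> k + 1"
      using \<open>e > 0\<close> by simp
    with \<open>j \<in> J\<close> \<open>J \<subseteq> {1..N}\<close> show "j \<in> {1..k + 1}"
      by auto
  qed
  have "k \<le> card J" "card J \<le> k + 1"
    using card_mono[OF _ \<open>{1..k} \<subseteq> J\<close>] card_mono[OF _ \<open>J \<subseteq> {1..k + 1}\<close>] finite_subset[OF \<open>J \<subseteq> {1..N}\<close>]
    by auto
  then have "real k * e \<le> e * real (card J)" "e * real (card J) \<le> (real k + 1) * e"
    using \<open>e > 0\<close> by (simp_all add: mult.commute)
  moreover have "(real k + 1) * e = real k * e + e"
    by (simp add: algebra_simps)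
  ultimately show ?thesis
    using k by linarith
qed

lemma first_Baire_class_step_approx:
  assumes normal: "normal_space X" and "e > 0"
    and bounded: "\<And>x. x \<in> topspace X \<Longrightarrow> h x \<in> {a..b}"
    and ambiguous: "\<And>j. fsigma_in X (A j)" "\<And>j. gdelta_in X (A j)"
    and lower: "\<And>j x. x \<in> topspace X \<Longrightarrow> a + real j * e \<le> h x \<Longrightarrow> x \<in> A j"
    and upper: "\<And>j x. x \<in> A j \<Longrightarrow> a + real j * e < h x + e"
  shows "\<exists>s. first_Baire_class X s \<and> (\<forall>x \<in> topspace X. \<bar>s x - h x\<bar> \<le> e)"
proof -
  define N where "N = nat \<lceil>(b - a) / e\<rceil>"
  \<comment> \<open>(s x - a) / e counts the levels a + j * e up to h x, give or take the next level\<close>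
  define s where "s x = a + (\<Sum>j \<in> {1..N}. if x \<in> A j then e else 0)" for x
  have "first_Baire_class X s"
    unfolding s_def
    by (intro first_Baire_class_add first_Baire_class_const first_Baire_class_sum
        first_Baire_class_two_valued normal ambiguous) simp
  moreover have "\<bar>s x - h x\<bar> \<le> e" if x: "x \<in> topspace X" for x
  proof -
    define J where "J = {j \<in> {1..N}. x \<in> A j}"
    have "(\<Sum>j \<in> {1..N}. if x \<in> A j then e else 0) = (\<Sum>j \<in> J. e)"
      unfolding J_def by (rule sum.inter_filter[symmetric]) simp
    then have s: "s x - h x = e * real (card J) - (h x - a)"
      unfolding s_def by (simp add: mult.commute)
    have "(b - a) / e \<le> real N"
      unfolding N_def by linarith
    then have "b - a \<le> real N * e"
      using \<open>e > 0\<close> by (simp add: divide_le_eq)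
    have "\<bar>e * real (card J) - (h x - a)\<bar> \<le> e"
    proof (rule card_levels_approx)
      show "0 \<le> h x - a" "h x - a \<le> real N * e"
        using bounded[OF x] \<open>b - a \<le> real N * e\<close> by auto
      show "J \<subseteq> {1..N}"
        unfolding J_def by auto
      show "j \<in> J" if "j \<in> {1..N}" "real j * e \<le> h x - a" for j
        using that lower[OF x, of j] unfolding J_def by auto
      show "real j * e < h x - a + e" if "j \<in> J" for j
        using that upper[of x j] unfolding J_def by auto
    qed (use \<open>e > 0\<close> in simp)
    with s show ?thesis
      by simp
  qed
  ultimately show ?thesis
    by blast
qed

lemma fsigma_measurable_bounded_imp_first_Baire_class:
  fixes h :: "'a \<Rightarrow> real"
  assumes perfect: "\<And>G. openin X G \<Longrightarrow> fsigma_in X G" and normal: "normal_space X"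
    and h: "fsigma_measurable X h" and bounded: "\<And>x. x \<in> topspace X \<Longrightarrow> h x \<in> {a..b}"
  shows "first_Baire_class X h"
proof (rule first_Baire_class_uniform_approx)
  fix e :: real assume "e > 0"
  have "\<forall>j. \<exists>A. {x \<in> topspace X. a + real j * e \<le> h x} \<subseteq> A
      \<and> A \<subseteq> {x \<in> topspace X. a + real j * e - e < h x} \<and> fsigma_in X A \<and> gdelta_in X A"
  proof
    fix j :: nat
    show "\<exists>A. {x \<in> topspace X. a + real j * e \<le> h x} \<subseteq> A
      \<and> A \<subseteq> {x \<in> topspace X. a + real j * e - e < h x} \<and> fsigma_in X A \<and> gdelta_in X A"
      by (rule fsigma_measurable_ambiguous_superlevel_set[OF perfect h, of "a + real j * e - e"])
        (use \<open>e > 0\<close> in auto)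
  qed
  then obtain A where "\<forall>j. {x \<in> topspace X. a + real j * e \<le> h x} \<subseteq> A j
      \<and> A j \<subseteq> {x \<in> topspace X. a + real j * e - e < h x} \<and> fsigma_in X (A j) \<and> gdelta_in X (A j)"
    by (auto dest: choice)
  then have A_lower: "\<And>j. {x \<in> topspace X. a + real j * e \<le> h x} \<subseteq> A j"
    and A_upper: "\<And>j. A j \<subseteq> {x \<in> topspace X. a + real j * e - e < h x}"
    and A_ambiguous: "\<And>j. fsigma_in X (A j)" "\<And>j. gdelta_in X (A j)"
    by simp_all
  show "\<exists>s. first_Baire_class X s \<and> (\<forall>x \<in> topspace X. \<bar>s x - h x\<bar> \<le> e)"
  proof (rule first_Baire_class_step_approx[OF normal \<open>e > 0\<close> bounded A_ambiguous])
    show "x \<in> A j" if "x \<in> topspace X" "a + real j * e \<le> h x" for j x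
      using A_lower[of j] that by auto
    show "a + real j * e < h x + e" if "x \<in> A j" for j x
      using A_upper[of j] that by auto
  qed
qed

theorem proposition3p4:
  fixes X :: "'a topology" and f :: "'a \<Rightarrow> real"
  assumes "regular_space X" and "Lusin_space X"
    and "quasicontinuous_on X f"
  shows "first_Baire_class X f"
proof -
  have t1: "t1_space X"
    using assms(2) by (simp add: Lusin_space_def Hausdorff_imp_t1_space)
  have normal: "normal_space X"
    using assms(1) Lusin_space_imp_Lindelof_space[OF assms(2)] by (rule regular_Lindelof_imp_normal_space)
  have perfect: "\<And>G. openin X G \<Longrightarrow> fsigma_in X G"
    using assms(1,2) by (rule regular_Lusin_space_openin_imp_fsigma_in)
  have "fsigma_measurable X f"
    using t1 perfect Lusin_space_countable_discontinuities[OF assms(2,3)]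
    by (rule fsigma_measurable_countable_discontinuities)
  then have "fsigma_measurable X (\<lambda>x. arctan (f x))"
    by (rule fsigma_measurable_compose) (intro continuous_intros)
  then have "first_Baire_class X (\<lambda>x. arctan (f x))"
    using arctan_bounded less_imp_le
    by (intro fsigma_measurable_bounded_imp_first_Baire_class[OF perfect normal, of _ "-pi/2" "pi/2"]) auto
  then have "first_Baire_class X (\<lambda>x. tan (arctan (f x)))"
  proof (rule first_Baire_class_compose_interval[where a = "-pi/2" and b = "pi/2" and \<phi> = tan])
    have "cos y \<noteq> 0" if "y \<in> {-pi/2<..<pi/2}" for y
      using that cos_gt_zero_pi[of y] by auto
    then show "continuous_on {-pi/2<..<pi/2} tan"
      by (intro continuous_intros) auto
  qed (use arctan_bounded in auto)
  then show ?thesis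
    by (simp add: tan_arctan)
qed

end
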